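(* Let $(Q,P)$ be a weakly quasi-lattice ordered group and let $\Lambda$ be a $P$-graph with $\mathrm{FA}(\Lambda)\neq\emptyset$. Let $\lambda,\lambda'\in\Lambda$ with $s(\lambda)=r(\lambda')$. Then the left-shift map $Z(\lambda)\to Z(s(\lambda))$, $x\mapsto\lambda^*\cdot x$, is a continuous bijection whose inverse is the right-shift map $Z(s(\lambda))\to Z(\lambda)$, $x\mapsto\lambda\cdot x$; moreover $\{\lambda^*\cdot x: x\in Z(\lambda\lambda')\}=Z(\lambda')$.
   Context: $(Q,P)$ weakly quasi-lattice ordered: $Q$ a discrete group, $P\subseteq Q$ a subsemigroup containing the identity $e$ with $P\cap P^{-1}=\{e\}$, and, with $p\le r$ meaning $pq=r$ for some $q\in P$, any two elements of $P$ with a common upper bound have a least common upper bound. A $P$-graph is a countable small category $\Lambda$ (identities $\Lambda^{(0)}$, range/source $r,s$) with a functor $d:\Lambda\to P$ with unique factorisation (if $d(\lambda)=pq$ there are unique $\mu,\nu$ with $\lambda=\mu\nu$, $d(\mu)=p$, $d(\nu)=q$). Write $\lambda\Lambda=\{\lambda\mu: s(\lambda)=r(\mu)\}$, $\mu\preceq\lambda$ iff $\lambda\in\mu\Lambda$. $\mathrm{FA}(\Lambda)$ is the set of $\lambda$ such that for all $\mu\in\lambda\Lambda,\nu\in\Lambda$ there is finite $J\subseteq\Lambda$ with $\mu\Lambda\cap\nu\Lambda=\bigcup_{\kappa\in J}\kappa\Lambda$. A filter is a nonempty hereditary and directed subset of $\Lambda$ (w.r.t. $\preceq$); $\mathcal{F}(\Lambda)$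 is the set of filters, topologised as a subspace of $\mathcal{P}(\Lambda)\cong\{0,1\}^\Lambda$ with the product topology (basis $\{x: K_1\subseteq x\subseteq\Lambda\setminus K_2\}$, $K_1,K_2$ finite). For $\mu\in\Lambda$, $Z(\mu)=\{x\in\mathcal{F}(\Lambda):\mu\in x\}$ with the subspace topology. For $x\in Z(\lambda)$, $\lambda^*\cdot x=\{\mu\in\Lambda:\lambda\mu\in x\}$ (a filter in $Z(s(\lambda))$), and for $x\in Z(s(\lambda))$, $\lambda\cdot x=\{\zeta\in\Lambda:\zeta\preceq\lambda\mu\text{ for some }\mu\in x\}$ (a filter in $Z(\lambda)$). *)

theory Defs
  imports "HOL-Analysis.Analysis" "HOL-Algebra.Group"
begin

definition wqlo_le :: "('g, 'b) monoid_scheme \<Rightarrow> 'g set \<Rightarrow> 'g \<Rightarrow> 'g \<Rightarrow> bool" where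
  "wqlo_le G P p r \<longleftrightarrow> (\<exists>q\<in>P. p \<otimes>\<^bsub>G\<^esub> q = r)"

definition wqlo :: "('g, 'b) monoid_scheme \<Rightarrow> 'g set \<Rightarrow> bool" where
  "wqlo G P \<longleftrightarrow> group G \<and> P \<subseteq> carrier G \<and> \<one>\<^bsub>G\<^esub> \<in> P
     \<and> (\<forall>p\<in>P. \<forall>q\<in>P. p \<otimes>\<^bsub>G\<^esub> q \<in> P)
     \<and> {p \<in> P. inv\<^bsub>G\<^esub> p \<in> P} = {\<one>\<^bsub>G\<^esub>}
     \<and> (\<forall>p\<in>P. \<forall>q\<in>P. (\<exists>u\<in>P. wqlo_le G P p u \<and> wqlo_le G P q u) \<longrightarrow>
          (\<exists>c\<in>P. wqlo_le G P p c \<and> wqlo_le G P q c \<and>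
              (\<forall>u\<in>P. wqlo_le G P p u \<and> wqlo_le G P q u \<longrightarrow> wqlo_le G P c u)))"

text \<open>A small category is given by its set of morphisms L, the set of identity
  morphisms Ob (identified with objects), range r, source s and a composition cmp,
  where cmp a b is meaningful when s a = r b.\<close>

definition small_category ::
  "'a set \<Rightarrow> 'a set \<Rightarrow> ('a \<Rightarrow> 'a) \<Rightarrow> ('a \<Rightarrow> 'a) \<Rightarrow> ('a \<Rightarrow> 'a \<Rightarrow> 'a) \<Rightarrow> bool" where
  "small_category L Ob r s cmp \<longleftrightarrow>
     Ob \<subseteq> L
     \<and> (\<forall>a\<in>L. r a \<in> Ob \<and> s a \<in> Ob)
     \<and> (\<forall>v\<in>Ob. r v = v \<and> s v = v)
     \<and> (\<forall>a\<in>L. \<forall>b\<in>L. s a = r b \<longrightarrow>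
           cmp a b \<in> L \<and> r (cmp a b) = r a \<and> s (cmp a b) = s b)
     \<and> (\<forall>a\<in>L. \<forall>b\<in>L. \<forall>c\<in>L. s a = r b \<and> s b = r c \<longrightarrow>
           cmp (cmp a b) c = cmp a (cmp b c))
     \<and> (\<forall>a\<in>L. cmp (r a) a = a \<and> cmp a (s a) = a)"

definition Pgraph ::
  "('g, 'b) monoid_scheme \<Rightarrow> 'g set \<Rightarrow> 'a set \<Rightarrow> 'a set \<Rightarrow> ('a \<Rightarrow> 'a) \<Rightarrow> ('a \<Rightarrow> 'a)
     \<Rightarrow> ('a \<Rightarrow> 'a \<Rightarrow> 'a) \<Rightarrow> ('a \<Rightarrow> 'g) \<Rightarrow> bool" where
  "Pgraph G P L Ob r s cmp d \<longleftrightarrow>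
     countable L
     \<and> small_category L Ob r s cmp
     \<and> (\<forall>a\<in>L. d a \<in> P)
     \<and> (\<forall>v\<in>Ob. d v = \<one>\<^bsub>G\<^esub>)
     \<and> (\<forall>a\<in>L. \<forall>b\<in>L. s a = r b \<longrightarrow> d (cmp a b) = d a \<otimes>\<^bsub>G\<^esub> d b)
     \<and> (\<forall>a\<in>L. \<forall>p\<in>P. \<forall>q\<in>P. d a = p \<otimes>\<^bsub>G\<^esub> q \<longrightarrow>
          (\<exists>!(m, n). m \<in> L \<and> n \<in> L \<and> s m = r n \<and> a = cmp m n \<and> d m = p \<and> d n = q))"

definition ext_set :: "'a set \<Rightarrow> ('a \<Rightarrow> 'a) \<Rightarrow> ('a \<Rightarrow> 'a) \<Rightarrow> ('a \<Rightarrow> 'a \<Rightarrow> 'a) \<Rightarrow> 'a \<Rightarrow> 'a set" where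
  "ext_set L r s cmp a = {cmp a m | m. m \<in> L \<and> s a = r m}"

definition pre :: "'a set \<Rightarrow> ('a \<Rightarrow> 'a) \<Rightarrow> ('a \<Rightarrow> 'a) \<Rightarrow> ('a \<Rightarrow> 'a \<Rightarrow> 'a) \<Rightarrow> 'a \<Rightarrow> 'a \<Rightarrow> bool" where
  "pre L r s cmp m a \<longleftrightarrow> a \<in> ext_set L r s cmp m"

definition FA :: "'a set \<Rightarrow> ('a \<Rightarrow> 'a) \<Rightarrow> ('a \<Rightarrow> 'a) \<Rightarrow> ('a \<Rightarrow> 'a \<Rightarrow> 'a) \<Rightarrow> 'a set" where
  "FA L r s cmp = {a \<in> L. \<forall>m \<in> ext_set L r s cmp a. \<forall>n \<in> L.
      \<exists>J. finite J \<and> J \<subseteq> L \<and>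
        ext_set L r s cmp m \<inter> ext_set L r s cmp n = (\<Union>k\<in>J. ext_set L r s cmp k)}"

definition filters :: "'a set \<Rightarrow> ('a \<Rightarrow> 'a) \<Rightarrow> ('a \<Rightarrow> 'a) \<Rightarrow> ('a \<Rightarrow> 'a \<Rightarrow> 'a) \<Rightarrow> 'a set set" where
  "filters L r s cmp = {x. x \<subseteq> L \<and> x \<noteq> {}
      \<and> (\<forall>a\<in>x. \<forall>m\<in>L. pre L r s cmp m a \<longrightarrow> m \<in> x)
      \<and> (\<forall>a\<in>x. \<forall>b\<in>x. \<exists>c\<in>x. pre L r s cmp a c \<and> pre L r s cmp b c)}"

text \<open>Product topology on P(\<Lambda>) = {0,1}^\<Lambda>, given by its standard basis
  {x : K1 \<subseteq> x \<subseteq> \<Lambda> - K2}, K1, K2 finite.\<close>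
definition powerset_top :: "'a set \<Rightarrow> 'a set topology" where
  "powerset_top L = topology_generated_by
     {{x. K1 \<subseteq> x \<and> x \<subseteq> L - K2} | K1 K2. finite K1 \<and> finite K2 \<and> K1 \<subseteq> L \<and> K2 \<subseteq> L}"

definition filter_top :: "'a set \<Rightarrow> ('a \<Rightarrow> 'a) \<Rightarrow> ('a \<Rightarrow> 'a) \<Rightarrow> ('a \<Rightarrow> 'a \<Rightarrow> 'a) \<Rightarrow> 'a set topology" where
  "filter_top L r s cmp = subtopology (powerset_top L) (filters L r s cmp)"

definition cyl :: "'a set \<Rightarrow> ('a \<Rightarrow> 'a) \<Rightarrow> ('a \<Rightarrow> 'a) \<Rightarrow> ('a \<Rightarrow> 'a \<Rightarrow> 'a) \<Rightarrow> 'a \<Rightarrow> 'a set set" where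
  "cyl L r s cmp m = {x \<in> filters L r s cmp. m \<in> x}"

definition lshift :: "'a set \<Rightarrow> ('a \<Rightarrow> 'a) \<Rightarrow> ('a \<Rightarrow> 'a) \<Rightarrow> ('a \<Rightarrow> 'a \<Rightarrow> 'a) \<Rightarrow> 'a \<Rightarrow> 'a set \<Rightarrow> 'a set" where
  "lshift L r s cmp a x = {m \<in> L. s a = r m \<and> cmp a m \<in> x}"

definition rshift :: "'a set \<Rightarrow> ('a \<Rightarrow> 'a) \<Rightarrow> ('a \<Rightarrow> 'a) \<Rightarrow> ('a \<Rightarrow> 'a \<Rightarrow> 'a) \<Rightarrow> 'a \<Rightarrow> 'a set \<Rightarrow> 'a set" where
  "rshift L r s cmp a x = {z \<in> L. \<exists>m\<in>x. s a = r m \<and> pre L r s cmp z (cmp a m)}"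

end

theory Submission
  imports Defs
begin

(* Only left cancellation in \<Lambda> is needed: if \<lambda>\<mu> = \<lambda>\<nu>, then d(\<mu>) = d(\<nu>) by cancellation
   in Q, and unique factorisation of \<lambda>\<mu> gives \<mu> = \<nu>. Left cancellation makes \<mu> \<preceq> \<nu>
   equivalent to \<lambda>\<mu> \<preceq> \<lambda>\<nu>, so both removing the prefix \<lambda> from the elements of a filter
   and prepending it again preserve hereditary directed sets, and the two operations undo each
   other. The left shift is continuous because \<mu> \<in> \<lambda>\<^sup>* \<cdot> x just says \<lambda>\<mu> \<in> x, so basic
   open sets pull back to basic open sets. *)

lemma topspace_powerset_top: "topspace (powerset_top L) = Pow L"
  unfolding powerset_top_def topology_generated_by_topspace by blast

lemma openin_powerset_top_basic:
  "\<lbrakk>finite K1; finite K2; K1 \<subseteq> L; K2 \<subseteq> L\<rbrakk>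
    \<Longrightarrow> openin (powerset_top L) {x. K1 \<subseteq> x \<and> x \<subseteq> L - K2}"
  unfolding powerset_top_def openin_topology_generated_by_iff
  by (rule generate_topology_on.Basis) blast

lemma continuous_map_powerset_topI:
  assumes "f \<in> topspace X \<rightarrow> Pow L"
    and "\<And>K1 K2. \<lbrakk>finite K1; finite K2; K1 \<subseteq> L; K2 \<subseteq> L\<rbrakk>
           \<Longrightarrow> openin X {x \<in> topspace X. K1 \<subseteq> f x \<and> f x \<inter> K2 = {}}"
  shows "continuous_map X (powerset_top L) f"
  unfolding powerset_top_def continuous_on_generated_topo_iff
proof (intro conjI allI impI)
  fix U assume "U \<in> {{x. K1 \<subseteq> x \<and> x \<subseteq> L - K2} | K1 K2. finite K1 \<and> finite K2 \<and> K1 \<subseteq> L \<and> K2 \<subseteq> L}"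
  then obtain K1 K2 where K: "finite K1" "finite K2" "K1 \<subseteq> L" "K2 \<subseteq> L"
    and U: "U = {x. K1 \<subseteq> x \<and> x \<subseteq> L - K2}"
    by blast
  have "f -` U \<inter> topspace X = {x \<in> topspace X. K1 \<subseteq> f x \<and> f x \<inter> K2 = {}}"
    using assms(1) by (auto simp: U)
  then show "openin X (f -` U \<inter> topspace X)"
    using assms(2)[OF K] by simp
next
  show "f ` topspace X \<subseteq> \<Union> {{x. K1 \<subseteq> x \<and> x \<subseteq> L - K2} | K1 K2. finite K1 \<and> finite K2 \<and> K1 \<subseteq> L \<and> K2 \<subseteq> L}"
    using assms(1) by blast
qed

locale left_cancellative_category =
  fixes L Ob :: "'a set" and r s :: "'a \<Rightarrow> 'a" and cmp :: "'a \<Rightarrow> 'a \<Rightarrow> 'a"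
  assumes small_category: "small_category L Ob r s cmp"
    and left_cancel: "\<lbrakk>a \<in> L; m \<in> L; n \<in> L; s a = r m; s a = r n; cmp a m = cmp a n\<rbrakk> \<Longrightarrow> m = n"
begin

lemma comp_closed: "\<lbrakk>a \<in> L; b \<in> L; s a = r b\<rbrakk> \<Longrightarrow> cmp a b \<in> L"
  and range_comp [simp]: "\<lbrakk>a \<in> L; b \<in> L; s a = r b\<rbrakk> \<Longrightarrow> r (cmp a b) = r a"
  and source_comp [simp]: "\<lbrakk>a \<in> L; b \<in> L; s a = r b\<rbrakk> \<Longrightarrow> s (cmp a b) = s b"
  and comp_assoc: "\<lbrakk>a \<in> L; b \<in> L; c \<in> L; s a = r b; s b = r c\<rbrakk> \<Longrightarrow> cmp (cmp a b) c = cmp a (cmp b c)"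
  and comp_range [simp]: "a \<in> L \<Longrightarrow> cmp (r a) a = a"
  and comp_source [simp]: "a \<in> L \<Longrightarrow> cmp a (s a) = a"
  using small_category unfolding small_category_def by blast+

lemma source_in: "a \<in> L \<Longrightarrow> s a \<in> L"
  and range_in: "a \<in> L \<Longrightarrow> r a \<in> L"
  and range_source [simp]: "a \<in> L \<Longrightarrow> r (s a) = s a"
  and source_range [simp]: "a \<in> L \<Longrightarrow> s (r a) = r a"
  using small_category unfolding small_category_def by blast+

abbreviation prefix_of (infix "\<preceq>" 50) where "m \<preceq> a \<equiv> pre L r s cmp m a"

lemma prefix_of_iff: "m \<preceq> a \<longleftrightarrow> (\<exists>n\<in>L. s m = r n \<and> a = cmp m n)"
  by (auto simp: pre_def ext_set_def)

lemma prefix_of_comp: "\<lbrakk>n \<in> L; s m = r n\<rbrakk> \<Longrightarrow> m \<preceq> cmp m n"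
  using prefix_of_iff by blast

lemma prefix_of_refl: "a \<in> L \<Longrightarrow> a \<preceq> a"
  using prefix_of_comp[of "s a" a] source_in by simp

lemma range_prefix_of: "a \<in> L \<Longrightarrow> r a \<preceq> a"
  using prefix_of_comp[of a "r a"] by simp

lemma range_prefix_eq: "\<lbrakk>m \<in> L; m \<preceq> a\<rbrakk> \<Longrightarrow> r a = r m"
  by (auto simp: prefix_of_iff comp_closed)

lemma prefix_of_trans: "\<lbrakk>a \<in> L; a \<preceq> b; b \<preceq> c\<rbrakk> \<Longrightarrow> a \<preceq> c"
proof -
  assume "a \<in> L" "a \<preceq> b" "b \<preceq> c"
  then obtain n k where "n \<in> L" "s a = r n" "b = cmp a n" "k \<in> L" "s b = r k" "c = cmp b k"
    by (auto simp: prefix_of_iff)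
  with \<open>a \<in> L\<close> show "a \<preceq> c"
    by (metis comp_assoc comp_closed prefix_of_comp range_comp source_comp)
qed

lemma comp_prefix_of_comp_iff:
  assumes "a \<in> L" "m \<in> L" "n \<in> L" "s a = r m" "s a = r n"
  shows "cmp a m \<preceq> cmp a n \<longleftrightarrow> m \<preceq> n"
proof
  assume "cmp a m \<preceq> cmp a n"
  then obtain k where k: "k \<in> L" "s m = r k" "cmp a n = cmp (cmp a m) k"
    using assms by (auto simp: prefix_of_iff)
  then have "cmp a n = cmp a (cmp m k)"
    using assms by (simp add: comp_assoc)
  then have "n = cmp m k"
    using assms k by (auto intro: left_cancel comp_closed)
  with k show "m \<preceq> n"
    by (simp add: prefix_of_comp)
next
  assume "m \<preceq> n"
  then obtain k where k: "k \<in> L" "s m = r k" "n = cmp m k"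
    by (auto simp: prefix_of_iff)
  with assms have "cmp a n = cmp (cmp a m) k"
    by (simp add: comp_assoc)
  with assms k show "cmp a m \<preceq> cmp a n"
    by (simp add: prefix_of_comp)
qed

abbreviation Z where "Z \<equiv> cyl L r s cmp"
abbreviation lsh where "lsh \<equiv> lshift L r s cmp"
abbreviation rsh where "rsh \<equiv> rshift L r s cmp"

lemma filter_subset: "x \<in> filters L r s cmp \<Longrightarrow> x \<subseteq> L"
  and filter_hereditary: "\<lbrakk>x \<in> filters L r s cmp; a \<in> x; m \<in> L; m \<preceq> a\<rbrakk> \<Longrightarrow> m \<in> x"
  and filter_directed: "\<lbrakk>x \<in> filters L r s cmp; a \<in> x; b \<in> x\<rbrakk> \<Longrightarrow> \<exists>c\<in>x. a \<preceq> c \<and> b \<preceq> c"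
  unfolding filters_def by blast+

lemma in_cylI:
  assumes "x \<subseteq> L" "m \<in> x"
    and "\<And>a n. \<lbrakk>a \<in> x; n \<in> L; n \<preceq> a\<rbrakk> \<Longrightarrow> n \<in> x"
    and "\<And>a b. \<lbrakk>a \<in> x; b \<in> x\<rbrakk> \<Longrightarrow> \<exists>c\<in>x. a \<preceq> c \<and> b \<preceq> c"
  shows "x \<in> Z m"
  using assms unfolding cyl_def filters_def by blast

lemma cyl_prefix_of: "\<lbrakk>x \<in> Z a; m \<in> L; m \<preceq> a\<rbrakk> \<Longrightarrow> x \<in> Z m"
  by (auto simp: cyl_def intro: filter_hereditary)

lemma lshift_in_cyl:
  assumes lam: "lam \<in> L" and x: "x \<in> Z lam"
  shows "lsh lam x \<in> Z (s lam)"
proof (rule in_cylI)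
  have xF: "x \<in> filters L r s cmp" and "lam \<in> x"
    using x by (auto simp: cyl_def)
  then show "s lam \<in> lsh lam x"
    using lam source_in by (simp add: lshift_def)
  show "n \<in> lsh lam x" if "a \<in> lsh lam x" "n \<in> L" "n \<preceq> a" for a n
  proof -
    have a: "a \<in> L" "s lam = r a" "cmp lam a \<in> x"
      using that(1) by (auto simp: lshift_def)
    then have "s lam = r n"
      using that range_prefix_eq by simp
    with a that lam have "cmp lam n \<in> x"
      by (meson comp_closed comp_prefix_of_comp_iff filter_hereditary xF)
    with that \<open>s lam = r n\<close> show ?thesis
      by (simp add: lshift_def)
  qed
  show "\<exists>c\<in>lsh lam x. a \<preceq> c \<and> b \<preceq> c" if "a \<in> lsh lam x" "b \<in> lsh lam x" for a b
  proof -
    have a: "a \<in> L" "s lam = r a" "cmp lam a \<in> x" and b: "b \<in> L" "s lam = r b" "cmp lam b \<in> x"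
      using that by (auto simp: lshift_def)
    obtain c where c: "c \<in> x" "cmp lam a \<preceq> c" "cmp lam b \<preceq> c"
      using filter_directed[OF xF a(3) b(3)] by blast
    have "lam \<preceq> c"
      using a c lam prefix_of_comp prefix_of_trans by blast
    then obtain n where n: "n \<in> L" "s lam = r n" "c = cmp lam n"
      by (auto simp: prefix_of_iff)
    have "a \<preceq> n" "b \<preceq> n"
      using a b c n lam comp_prefix_of_comp_iff by auto
    moreover have "n \<in> lsh lam x"
      using n c by (simp add: lshift_def)
    ultimately show ?thesis by blast
  qed
qed (simp add: lshift_def)

lemma rshift_in_cyl:
  assumes lam: "lam \<in> L" and y: "y \<in> Z (s lam)"
  shows "rsh lam y \<in> Z lam"
proof (rule in_cylI)
  have yF: "y \<in> filters L r s cmp" and "s lam \<in> y"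
    using y by (auto simp: cyl_def)
  then show "lam \<in> rsh lam y"
    using lam source_in by (force simp: rshift_def prefix_of_refl)
  show "n \<in> rsh lam y" if "a \<in> rsh lam y" "n \<in> L" "n \<preceq> a" for a n
    using that prefix_of_trans by (auto simp: rshift_def)
  show "\<exists>c\<in>rsh lam y. a \<preceq> c \<and> b \<preceq> c" if ab: "a \<in> rsh lam y" "b \<in> rsh lam y" for a b
  proof -
    obtain m1 m2 where m: "a \<in> L" "m1 \<in> y" "s lam = r m1" "a \<preceq> cmp lam m1"
      "b \<in> L" "m2 \<in> y" "s lam = r m2" "b \<preceq> cmp lam m2"
      using ab unfolding rshift_def by blast
    obtain c where c: "c \<in> y" "m1 \<preceq> c" "m2 \<preceq> c"
      using filter_directed[OF yF m(2) m(6)] by blast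
    have inL: "m1 \<in> L" "m2 \<in> L" "c \<in> L"
      using filter_subset[OF yF] m c by auto
    have "s lam = r c"
      using inL c m range_prefix_eq by metis
    then have "a \<preceq> cmp lam c" "b \<preceq> cmp lam c" "cmp lam c \<in> rsh lam y"
      using m inL c lam
      by (metis comp_prefix_of_comp_iff prefix_of_trans,
          metis comp_prefix_of_comp_iff prefix_of_trans,
          auto simp: rshift_def intro: comp_closed prefix_of_refl)
    then show ?thesis by blast
  qed
qed (simp add: rshift_def)

lemma rshift_lshift:
  assumes lam: "lam \<in> L" and x: "x \<in> Z lam"
  shows "rsh lam (lsh lam x) = x"
proof
  have xF: "x \<in> filters L r s cmp" and "lam \<in> x"
    using x by (auto simp: cyl_def)
  show "rsh lam (lsh lam x) \<subseteq> x"
    unfolding rshift_def lshift_def using filter_hereditary[OF xF] by blast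
  show "x \<subseteq> rsh lam (lsh lam x)"
  proof
    fix z assume "z \<in> x"
    then obtain c where c: "c \<in> x" "lam \<preceq> c" "z \<preceq> c"
      using filter_directed[OF xF \<open>lam \<in> x\<close>] by blast
    then obtain n where "n \<in> L" "s lam = r n" "c = cmp lam n"
      by (auto simp: prefix_of_iff)
    with c \<open>z \<in> x\<close> show "z \<in> rsh lam (lsh lam x)"
      using filter_subset[OF xF] by (auto simp: rshift_def lshift_def)
  qed
qed

lemma lshift_rshift:
  assumes lam: "lam \<in> L" and y: "y \<in> Z (s lam)"
  shows "lsh lam (rsh lam y) = y"
proof
  have yF: "y \<in> filters L r s cmp" and "s lam \<in> y"
    using y by (auto simp: cyl_def)
  show "lsh lam (rsh lam y) \<subseteq> y"
  proof
    fix m assume "m \<in> lsh lam (rsh lam y)"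
    then obtain n where "m \<in> L" "s lam = r m" "n \<in> y" "s lam = r n" "cmp lam m \<preceq> cmp lam n"
      by (auto simp: lshift_def rshift_def)
    with lam filter_subset[OF yF] show "m \<in> y"
      by (meson comp_prefix_of_comp_iff filter_hereditary subsetD yF)
  qed
  show "y \<subseteq> lsh lam (rsh lam y)"
  proof
    fix m assume "m \<in> y"
    then obtain c where c: "c \<in> y" "s lam \<preceq> c" "m \<preceq> c"
      using filter_directed[OF yF \<open>s lam \<in> y\<close>] by blast
    have "m \<in> L" "c \<in> L"
      using \<open>m \<in> y\<close> c filter_subset[OF yF] by auto
    then have "s lam = r m"
      using c lam source_in range_prefix_eq by (metis range_source)
    with \<open>m \<in> L\<close> \<open>m \<in> y\<close> lam show "m \<in> lsh lam (rsh lam y)"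
      by (auto simp: lshift_def rshift_def intro: comp_closed prefix_of_refl)
  qed
qed

lemma bij_betw_lshift_cyl:
  assumes "lam \<in> L"
  shows "bij_betw (lsh lam) (Z lam) (Z (s lam))"
  using assms
  by (intro bij_betw_byWitness[where f'="rsh lam"])
    (auto simp: rshift_lshift lshift_rshift lshift_in_cyl rshift_in_cyl)

lemma lshift_image_cyl_comp:
  assumes lam: "lam \<in> L" and lam': "lam' \<in> L" and "s lam = r lam'"
  shows "lsh lam ` Z (cmp lam lam') = Z lam'"
proof
  have lam_lam': "cmp lam lam' \<in> L" "lam \<preceq> cmp lam lam'"
    using assms by (auto intro: comp_closed prefix_of_comp)
  show "lsh lam ` Z (cmp lam lam') \<subseteq> Z lam'"
  proof
    fix y assume "y \<in> lsh lam ` Z (cmp lam lam')"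
    then obtain x where x: "x \<in> Z (cmp lam lam')" "y = lsh lam x"
      by blast
    then have "y \<in> Z (s lam)"
      using lam lam_lam' cyl_prefix_of lshift_in_cyl by blast
    moreover have "lam' \<in> y"
      using x lam' assms(3) by (auto simp: lshift_def cyl_def)
    ultimately show "y \<in> Z lam'"
      by (simp add: cyl_def)
  qed
  show "Z lam' \<subseteq> lsh lam ` Z (cmp lam lam')"
  proof
    fix y assume y: "y \<in> Z lam'"
    then have y_s: "y \<in> Z (s lam)"
      using lam' assms(3) range_in range_prefix_of cyl_prefix_of by metis
    have "cmp lam lam' \<in> rsh lam y"
      using y lam_lam' assms(3) prefix_of_refl by (auto simp: rshift_def cyl_def)
    then have "rsh lam y \<in> Z (cmp lam lam')"
      using rshift_in_cyl[OF lam y_s] by (simp add: cyl_def)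
    then show "y \<in> lsh lam ` Z (cmp lam lam')"
      using lshift_rshift[OF lam y_s] by force
  qed
qed

lemma subtopology_filter_top_cyl:
  "subtopology (filter_top L r s cmp) (Z m) = subtopology (powerset_top L) (Z m)"
proof -
  have "filters L r s cmp \<inter> Z m = Z m"
    by (auto simp: cyl_def)
  then show ?thesis
    by (simp add: filter_top_def subtopology_subtopology)
qed

lemma continuous_lshift:
  assumes lam: "lam \<in> L"
  shows "continuous_map (subtopology (filter_top L r s cmp) (Z lam))
                        (subtopology (filter_top L r s cmp) (Z (s lam))) (lsh lam)"
proof -
  define X where "X = subtopology (powerset_top L) (Z lam)"
  have X: "topspace X = Z lam"
    unfolding X_def using filter_subset by (auto simp: cyl_def topspace_powerset_top)
  have "continuous_map X (powerset_top L) (lsh lam)"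
  proof (rule continuous_map_powerset_topI)
    show "lsh lam \<in> topspace X \<rightarrow> Pow L"
      by (auto simp: lshift_def)
    fix K1 K2 :: "'a set" assume "finite K1" "finite K2" "K1 \<subseteq> L" "K2 \<subseteq> L"
    show "openin X {x \<in> topspace X. K1 \<subseteq> lsh lam x \<and> lsh lam x \<inter> K2 = {}}"
    proof (cases "\<forall>m\<in>K1. s lam = r m")
      case True
      let ?K2 = "{m \<in> K2. s lam = r m}"
      have "{x \<in> topspace X. K1 \<subseteq> lsh lam x \<and> lsh lam x \<inter> K2 = {}}
          = Z lam \<inter> {x. cmp lam ` K1 \<subseteq> x \<and> x \<subseteq> L - cmp lam ` ?K2}"
        using True \<open>K1 \<subseteq> L\<close> \<open>K2 \<subseteq> L\<close> filter_subset unfolding X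
        by (auto simp: lshift_def cyl_def) blast+
      moreover have "openin (powerset_top L) {x. cmp lam ` K1 \<subseteq> x \<and> x \<subseteq> L - cmp lam ` ?K2}"
        using True \<open>finite K1\<close> \<open>finite K2\<close> \<open>K1 \<subseteq> L\<close> \<open>K2 \<subseteq> L\<close> lam by (intro openin_powerset_top_basic) (auto intro: comp_closed)
      ultimately show ?thesis
        unfolding X_def by (simp add: openin_subtopology_Int2)
    next
      case False
      then have "{x \<in> topspace X. K1 \<subseteq> lsh lam x \<and> lsh lam x \<inter> K2 = {}} = {}"
        by (auto simp: lshift_def)
      then show ?thesis by (simp only: openin_empty)
    qed
  qed
  moreover have "lsh lam \<in> topspace X \<rightarrow> Z (s lam)"
    using X lam lshift_in_cyl by blast
  ultimately show ?thesis
    unfolding subtopology_filter_top_cyl X_def[symmetric] continuous_map_in_subtopology by blast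
qed

end

lemma Pgraph_left_cancellative_category:
  assumes G: "group G" "P \<subseteq> carrier G" and Pg: "Pgraph G P L Ob r s cmp d"
  shows "left_cancellative_category L Ob r s cmp"
proof
  show sc: "small_category L Ob r s cmp"
    using Pg by (simp add: Pgraph_def)
  fix a m n assume amn: "a \<in> L" "m \<in> L" "n \<in> L" "s a = r m" "s a = r n" "cmp a m = cmp a n"
  have dP: "\<forall>x\<in>L. d x \<in> P"
    and d_comp: "\<forall>a\<in>L. \<forall>b\<in>L. s a = r b \<longrightarrow> d (cmp a b) = d a \<otimes>\<^bsub>G\<^esub> d b"
    and factor: "\<forall>a\<in>L. \<forall>p\<in>P. \<forall>q\<in>P. d a = p \<otimes>\<^bsub>G\<^esub> q \<longrightarrow>
          (\<exists>!(m, n). m \<in> L \<and> n \<in> L \<and> s m = r n \<and> a = cmp m n \<and> d m = p \<and> d n = q)"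
    using Pg by (auto simp: Pgraph_def)
  have d_am: "d (cmp a m) = d a \<otimes>\<^bsub>G\<^esub> d m"
    using d_comp amn(1,2,4) by simp
  have "d a \<otimes>\<^bsub>G\<^esub> d m = d a \<otimes>\<^bsub>G\<^esub> d n"
    using d_am d_comp amn(1,3,5,6) by simp
  moreover have "d a \<in> carrier G" "d m \<in> carrier G" "d n \<in> carrier G"
    using G dP amn by auto
  ultimately have "d m = d n"
    using G(1) by (simp add: group.Units_eq monoid.Units_l_cancel group.is_monoid)
  define factorisation where "factorisation w \<longleftrightarrow>
    (case w of (x, y) \<Rightarrow> x \<in> L \<and> y \<in> L \<and> s x = r y \<and> cmp a m = cmp x y \<and> d x = d a \<and> d y = d m)"
    for w
  have "cmp a m \<in> L"
    using sc amn unfolding small_category_def by blast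
  moreover have "d a \<in> P" "d m \<in> P"
    using dP amn by auto
  ultimately have "\<exists>!w. factorisation w"
    unfolding factorisation_def using d_am by (rule factor[rule_format])
  moreover have "factorisation (a, m)" "factorisation (a, n)"
    using amn \<open>d m = d n\<close> by (auto simp: factorisation_def)
  ultimately show "m = n"
    by blast
qed

theorem lemma5p3:
  fixes G :: "('g, 'b) monoid_scheme" and P :: "'g set"
    and L Ob :: "'a set" and r s :: "'a \<Rightarrow> 'a" and cmp :: "'a \<Rightarrow> 'a \<Rightarrow> 'a"
    and d :: "'a \<Rightarrow> 'g" and lam lam' :: 'a
  assumes "wqlo G P"
    and "Pgraph G P L Ob r s cmp d"
    and "FA L r s cmp \<noteq> {}"
    and "lam \<in> L" and "lam' \<in> L" and "s lam = r lam'"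
  shows "continuous_map (subtopology (filter_top L r s cmp) (cyl L r s cmp lam))
                        (subtopology (filter_top L r s cmp) (cyl L r s cmp (s lam)))
                        (lshift L r s cmp lam)
       \<and> bij_betw (lshift L r s cmp lam) (cyl L r s cmp lam) (cyl L r s cmp (s lam))
       \<and> (\<forall>x\<in>cyl L r s cmp lam. rshift L r s cmp lam (lshift L r s cmp lam x) = x)
       \<and> (\<forall>y\<in>cyl L r s cmp (s lam). lshift L r s cmp lam (rshift L r s cmp lam y) = y)
       \<and> lshift L r s cmp lam ` cyl L r s cmp (cmp lam lam') = cyl L r s cmp lam'"
proof -
  have "group G" "P \<subseteq> carrier G"
    using assms(1) by (auto simp: wqlo_def)
  then interpret left_cancellative_category L Ob r s cmp
    using assms(2) by (rule Pgraph_left_cancellative_category)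
  show ?thesis
    using continuous_lshift[OF assms(4)] bij_betw_lshift_cyl[OF assms(4)]
      rshift_lshift[OF assms(4)] lshift_rshift[OF assms(4)] lshift_image_cyl_comp[OF assms(4-6)]
    by blast
qed

end
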